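(* Let $K,T\subset\mathbb{R}^n$ be convex bodies and let $q=(q_1,\dots,q_m)$ be a closed $(K,T)$-Minkowski billiard trajectory with closed dual billiard trajectory $p=(p_1,\dots,p_m)$. Then $\{q_1,\dots,q_m\}\in F(K)$ and $\{p_1,\dots,p_m\}\in F(T)$.
   Context: A convex body is a compact convex set in $\mathbb{R}^n$ containing the origin in its interior. For a convex body $K$, $F(K)$ denotes the set of subsets of $\mathbb{R}^n$ which cannot be translated into the interior $\mathring K$ of $K$ (i.e., $A\in F(K)$ iff $A+x\not\subseteq\mathring K$ for all $x\in\mathbb{R}^n$). For a convex set $C$ and $z\in\partial C$, $N_C(z)=\{v:\langle v,y-z\rangle\le 0\ \forall y\in C\}$. A closed polygonal curve $(q_1,\dots,q_m)$, $m\ge2$, always satisfies $q_j\ne q_{j+1}$ and $q_j\notin[q_{j-1},q_{j+1}]$ (indices mod $m$). A closed polygonal curve $q$ with vertices on $\partial K$ is a closed $(K,T)$-Minkowski billiard trajectory if there are $p_1,\dots,p_m\in\partial T$ with $q_{j+1}-q_j\in N_T(p_j)$ and $p_{j+1}-p_j\in -N_K(q_{j+1})$ for all $j$; $p=(p_1,\dots,p_m)$ is a closed dual billiard trajectory in $T$. *)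

theory Defs
  imports "HOL-Analysis.Analysis"
begin

definition convex_body :: "'a::euclidean_space set \<Rightarrow> bool" where
  "convex_body K \<longleftrightarrow> compact K \<and> convex K \<and> 0 \<in> interior K"

definition F :: "'a::euclidean_space set \<Rightarrow> 'a set set" where
  "F K = {A. \<forall>x. \<not> ((\<lambda>a. a + x) ` A \<subseteq> interior K)}"

definition normal_cone :: "'a::euclidean_space set \<Rightarrow> 'a \<Rightarrow> 'a set" where
  "normal_cone C z = {v. \<forall>y\<in>C. inner v (y - z) \<le> 0}"

definition closed_polygonal_curve :: "nat \<Rightarrow> (nat \<Rightarrow> 'a::euclidean_space) \<Rightarrow> bool" where
  "closed_polygonal_curve m q \<longleftrightarrow> m \<ge> 2 \<and>
     (\<forall>j<m. q j \<noteq> q ((j + 1) mod m) \<and>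
            q j \<notin> closed_segment (q ((j + m - 1) mod m)) (q ((j + 1) mod m)))"

definition minkowski_billiard_traj ::
  "'a::euclidean_space set \<Rightarrow> 'a set \<Rightarrow> nat \<Rightarrow> (nat \<Rightarrow> 'a) \<Rightarrow> (nat \<Rightarrow> 'a) \<Rightarrow> bool" where
  "minkowski_billiard_traj K T m q p \<longleftrightarrow>
     closed_polygonal_curve m q \<and>
     (\<forall>j<m. q j \<in> frontier K) \<and>
     (\<forall>j<m. p j \<in> frontier T) \<and>
     (\<forall>j<m. q ((j + 1) mod m) - q j \<in> normal_cone T (p j)) \<and>
     (\<forall>j<m. p ((j + 1) mod m) - p j \<in> uminus ` normal_cone K (q ((j + 1) mod m)))"

end

theory Submission
  imports Defs
begin

text \<open>If the vertex set could be translated by x into the interior, every segment vector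
  q(j+1) - q(j), being normal to T at p(j) with p(j) + x interior, would satisfy
  \<open>\<langle>q(j+1) - q(j), x\<rangle> < 0\<close> unless it vanishes; since these vectors sum to zero around
  the closed curve, all of them would vanish, which is impossible. Symmetrically the
  vectors p(j) - p(j+1) are normal to K at q(j+1), so translating q into the interior of K
  forces p to be constant; then the q-segments are all normal to T at one point p(0), and
  comparing with the interior point 0 of T gives the same contradiction.\<close>

lemma inner_normal_cone_interior_neg:
  fixes C :: "'a::euclidean_space set"
  assumes z: "z \<in> interior C" and v: "v \<in> normal_cone C y" and "v \<noteq> 0"
  shows "inner v (z - y) < 0"
proof -
  obtain e where e: "e > 0" "ball z e \<subseteq> C" using z by (meson mem_interior)
  define t where "t = e / (2 * norm v)"
  have t: "t > 0" using e \<open>v \<noteq> 0\<close> by (simp add: t_def)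
  have "norm (t *\<^sub>R v) = e / 2" using \<open>v \<noteq> 0\<close> e by (simp add: t_def)
  then have "z + t *\<^sub>R v \<in> C" using e by (auto simp: dist_norm)
  then have "inner v (z + t *\<^sub>R v - y) \<le> 0" using v by (simp add: normal_cone_def)
  moreover have "inner v (z + t *\<^sub>R v - y) = inner v (z - y) + t * inner v v"
    by (simp add: inner_diff_right inner_add_right algebra_simps)
  moreover have "t * inner v v > 0" using t \<open>v \<noteq> 0\<close> by simp
  ultimately show ?thesis by linarith
qed

lemma normal_cone_sum_eq_0_imp_zero:
  fixes C :: "'a::euclidean_space set"
  assumes "finite I" and sum0: "(\<Sum>j\<in>I. w j) = 0"
    and normal: "\<And>j. j \<in> I \<Longrightarrow> w j \<in> normal_cone C (z j)"
    and interior: "\<And>j. j \<in> I \<Longrightarrow> z j + x \<in> interior C"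
  shows "\<forall>j\<in>I. w j = 0"
proof -
  have neg: "inner (w j) x < 0" if "j \<in> I" "w j \<noteq> 0" for j
    using inner_normal_cone_interior_neg[OF interior[OF that(1)] normal[OF that(1)] that(2)]
    by simp
  then have nonneg: "\<forall>j\<in>I. 0 \<le> - inner (w j) x"
    by (metis neg_0_le_iff_le order.order_iff_strict inner_zero_left)
  have "(\<Sum>j\<in>I. - inner (w j) x) = - inner (\<Sum>j\<in>I. w j) x"
    by (simp add: inner_sum_left sum_negf)
  with sum0 have "\<forall>j\<in>I. - inner (w j) x = 0"
    using sum_nonneg_eq_0_iff[OF \<open>finite I\<close>, of "\<lambda>j. - inner (w j) x"] nonneg by simp
  then have "\<forall>j\<in>I. inner (w j) x = 0" by simp
  with neg show ?thesis by fastforce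
qed

lemma sum_cyclic_diff_eq_0:
  fixes f :: "nat \<Rightarrow> 'a::ab_group_add"
  assumes "m > 0"
  shows "(\<Sum>j<m. f ((j + 1) mod m) - f j) = 0"
proof -
  obtain k where m: "m = Suc k" using assms by (cases m) auto
  have "(\<Sum>j<m. f ((j + 1) mod m)) = (\<Sum>j<k. f ((j + 1) mod Suc k)) + f 0"
    unfolding m by (simp add: sum.lessThan_Suc)
  also have "(\<Sum>j<k. f ((j + 1) mod Suc k)) = (\<Sum>j<k. f (Suc j))"
    by (rule sum.cong) auto
  also have "\<dots> + f 0 = (\<Sum>j<m. f j)"
    unfolding m sum.lessThan_Suc_shift by (simp add: add.commute)
  finally have "(\<Sum>j<m. f ((j + 1) mod m)) = (\<Sum>j<m. f j)" .
  then show ?thesis by (simp add: sum_subtractf)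
qed

lemma cyclic_invariant_imp_constant:
  fixes j m :: nat
  assumes "\<forall>j<m. f ((j + 1) mod m) = f j"
  shows "j < m \<Longrightarrow> f j = f 0"
proof (induction j)
  case (Suc j)
  then have "(j + 1) mod m = Suc j" by simp
  with assms(1) Suc show ?case by (metis Suc_lessD)
qed simp

lemma minkowski_billiard_traj_segments_sum:
  assumes "minkowski_billiard_traj K T m q p"
  shows "(\<Sum>j<m. q ((j + 1) mod m) - q j) = 0"
    and "\<exists>j<m. q ((j + 1) mod m) - q j \<noteq> 0"
proof -
  have "m \<ge> 2" and "\<forall>j<m. q j \<noteq> q ((j + 1) mod m)"
    using assms unfolding minkowski_billiard_traj_def closed_polygonal_curve_def by blast+
  then show "(\<Sum>j<m. q ((j + 1) mod m) - q j) = 0"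
    using sum_cyclic_diff_eq_0[of m q] by simp
  have "0 < m" using \<open>m \<ge> 2\<close> by simp
  with \<open>\<forall>j<m. q j \<noteq> q ((j + 1) mod m)\<close> have "q 0 \<noteq> q ((0 + 1) mod m)" by blast
  with \<open>0 < m\<close> show "\<exists>j<m. q ((j + 1) mod m) - q j \<noteq> 0"
    by (metis eq_iff_diff_eq_0)
qed

lemma minkowski_billiard_traj_dual_not_translate_interior:
  assumes traj: "minkowski_billiard_traj K T m q p"
    and interior: "\<And>j. j < m \<Longrightarrow> p j + x \<in> interior T"
  shows False
proof -
  have "\<forall>j\<in>{..<m}. q ((j + 1) mod m) - q j = 0"
  proof (rule normal_cone_sum_eq_0_imp_zero)
    show "(\<Sum>j\<in>{..<m}. q ((j + 1) mod m) - q j) = 0"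
      using minkowski_billiard_traj_segments_sum(1)[OF traj] .
    show "q ((j + 1) mod m) - q j \<in> normal_cone T (p j)" if "j \<in> {..<m}" for j
      using traj that unfolding minkowski_billiard_traj_def by simp
    show "p j + x \<in> interior T" if "j \<in> {..<m}" for j
      using interior that by simp
  qed simp
  with minkowski_billiard_traj_segments_sum(2)[OF traj] show False by auto
qed

lemma minkowski_billiard_traj_dual_in_F:
  assumes "minkowski_billiard_traj K T m q p"
  shows "p ` {..<m} \<in> F T"
  using minkowski_billiard_traj_dual_not_translate_interior[OF assms]
  unfolding F_def by (auto simp: image_subset_iff)

lemma minkowski_billiard_traj_in_F:
  assumes traj: "minkowski_billiard_traj K T m q p" and "0 \<in> interior T"
  shows "q ` {..<m} \<in> F K"
proof (rule ccontr)
  assume "q ` {..<m} \<notin> F K"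
  then obtain x where x: "\<And>j. j < m \<Longrightarrow> q j + x \<in> interior K"
    unfolding F_def by (auto simp: image_subset_iff)
  have "m > 0"
    using traj unfolding minkowski_billiard_traj_def closed_polygonal_curve_def by simp
  have "\<forall>j\<in>{..<m}. p j - p ((j + 1) mod m) = 0"
  proof (rule normal_cone_sum_eq_0_imp_zero)
    show "(\<Sum>j\<in>{..<m}. p j - p ((j + 1) mod m)) = 0"
      using sum_cyclic_diff_eq_0[OF \<open>m > 0\<close>, of p] by (simp add: sum_subtractf)
    show "p j - p ((j + 1) mod m) \<in> normal_cone K (q ((j + 1) mod m))" if "j \<in> {..<m}" for j
    proof -
      have "- (p j - p ((j + 1) mod m)) \<in> uminus ` normal_cone K (q ((j + 1) mod m))"
        using traj that unfolding minkowski_billiard_traj_def by simp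
      then show ?thesis by (metis image_iff minus_minus)
    qed
    show "q ((j + 1) mod m) + x \<in> interior K" if "j \<in> {..<m}" for j
      using x \<open>m > 0\<close> by simp
  qed simp
  then have "\<forall>j<m. p ((j + 1) mod m) = p j"
    by (metis lessThan_iff eq_iff_diff_eq_0)
  then have p_const: "\<And>j. j < m \<Longrightarrow> p j = p 0"
    by (rule cyclic_invariant_imp_constant)
  have "p j + - p 0 \<in> interior T" if "j < m" for j
    using p_const[OF that] \<open>0 \<in> interior T\<close> by simp
  with minkowski_billiard_traj_dual_not_translate_interior[OF traj] show False .
qed

theorem proposition3p9:
  fixes K T :: "'a::euclidean_space set" and q p :: "nat \<Rightarrow> 'a" and m :: nat
  assumes "convex_body K" and "convex_body T"
    and "minkowski_billiard_traj K T m q p"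
  shows "q ` {..<m} \<in> F K \<and> p ` {..<m} \<in> F T"
  using minkowski_billiard_traj_in_F[OF assms(3)] minkowski_billiard_traj_dual_in_F[OF assms(3)]
    \<open>convex_body T\<close> by (simp add: convex_body_def)

end
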